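(* Let $d\in\mathbb{N}$ and let $\mathcal{P}$ be a partition of $\mathbb{R}^{d}$. Suppose there exists $D\in(0,\infty)$ such that $\operatorname{diam}(X)\leq D$ for all $X\in\mathcal{P}$, and let $\epsilon\in(0,\infty)$ be such that $|\mathcal{N}_{\epsilon}(\vec{p})|\leq 2^{d}$ for all $\vec{p}\in\mathbb{R}^{d}$. Then $\epsilon\leq\frac{D}{2}$.
   Context: On $\mathbb{R}^d$ use $d_{max}(\vec{x},\vec{y})=\max_i|x_i-y_i|$; $\operatorname{diam}(X)=\sup\{d_{max}(\vec{x},\vec{y}):\vec{x},\vec{y}\in X\}$; $\overline{B}_{\epsilon}(\vec{p})=\{\vec{x}: d_{max}(\vec{x},\vec{p})\le\epsilon\}$; $\mathcal{N}_{\epsilon}(\vec{p})=\{X\in\mathcal{P}: X\cap\overline{B}_{\epsilon}(\vec{p})\neq\emptyset\}$. *)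

theory Defs
  imports "HOL-Analysis.Analysis"
begin

text \<open>Maximum (sup) metric on R^d, realised as real^'n with d = CARD('n).\<close>
definition dmax :: "real^'n \<Rightarrow> real^'n \<Rightarrow> real" where
  "dmax x y = Max (range (\<lambda>i. \<bar>x $ i - y $ i\<bar>))"

definition diam_max :: "(real^'n) set \<Rightarrow> ereal" where
  "diam_max X = (SUP p\<in>X \<times> X. ereal (dmax (fst p) (snd p)))"

definition closed_ball_max :: "real \<Rightarrow> real^'n \<Rightarrow> (real^'n) set" where
  "closed_ball_max e p = {x. dmax x p \<le> e}"

definition nbhd_parts :: "(real^'n) set set \<Rightarrow> real \<Rightarrow> real^'n \<Rightarrow> (real^'n) set set" where
  "nbhd_parts P e p = {X \<in> P. X \<inter> closed_ball_max e p \<noteq> {}}"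

definition is_partition :: "(real^'n) set set \<Rightarrow> bool" where
  "is_partition P \<longleftrightarrow> (\<forall>X\<in>P. X \<noteq> {}) \<and> \<Union>P = UNIV \<and>
     (\<forall>X\<in>P. \<forall>Y\<in>P. X \<noteq> Y \<longrightarrow> X \<inter> Y = {})"

end

theory Submission
  imports Defs
begin

text \<open>Suppose \<open>D < 2\<epsilon>\<close>. The \<open>2^d\<close> corners \<open>p \<pm> \<epsilon>\<close> of the \<open>\<epsilon>\<close>-ball around \<open>p\<close> are pairwise
  \<open>2\<epsilon>\<close> apart, so they lie in \<open>2^d\<close> distinct parts, all meeting the ball; by the bound on
  \<open>|\<N>\<^sub>\<epsilon>(p)|\<close> these are all the parts meeting it, so every such part contains a corner.
  Now move the centre by \<open>0 < t < 2\<epsilon> - D\<close> along the diagonal. The part containing the top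
  corner of the old ball meets the new ball, and every corner of the new ball except the
  top one is more than \<open>D\<close> away from the old top corner; so this part also contains the
  new top corner. Iterating, one part contains points arbitrarily far apart.\<close>

lemma dmax_le_iff: "dmax x y \<le> e \<longleftrightarrow> (\<forall>i. \<bar>x $ i - y $ i\<bar> \<le> e)"
  unfolding dmax_def by (subst Max_le_iff) auto

lemma abs_component_diff_le_dmax: "\<bar>x $ i - y $ i\<bar> \<le> dmax x y"
  unfolding dmax_def by (rule Max_ge) auto

lemma dmax_le_if_diam_max_le:
  assumes "diam_max X \<le> ereal D" "x \<in> X" "y \<in> X"
  shows "dmax x y \<le> D"
proof -
  have "ereal (dmax x y) \<le> diam_max X"
    unfolding diam_max_def using assms(2,3) by (intro SUP_upper2[of "(x, y)"]) auto
  with assms(1) have "ereal (dmax x y) \<le> ereal D"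
    by (rule order_trans[rotated])
  then show ?thesis by simp
qed

definition corner :: "real \<Rightarrow> real^'n \<Rightarrow> 'n set \<Rightarrow> real^'n" where
  "corner e p u = (\<chi> i. p $ i + (if i \<in> u then e else - e))"

lemma corner_in_closed_ball_max: "0 \<le> e \<Longrightarrow> corner e p u \<in> closed_ball_max e p"
  unfolding closed_ball_max_def dmax_le_iff corner_def by auto

lemma corners_in_same_part_eq:
  assumes "diam_max X \<le> ereal D" "D < 2 * e" "0 \<le> e"
    and "corner e p u \<in> X" "corner e p v \<in> X"
  shows "u = v"
proof (rule ccontr)
  assume "u \<noteq> v"
  then obtain i where i: "(i \<in> u) \<noteq> (i \<in> v)" by blast
  have "\<bar>corner e p u $ i - corner e p v $ i\<bar> = 2 * e"
    using i \<open>0 \<le> e\<close> unfolding corner_def by auto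
  then show False
    using abs_component_diff_le_dmax[of "corner e p u" i "corner e p v"]
      dmax_le_if_diam_max_le[OF assms(1,4,5)] \<open>D < 2 * e\<close> by linarith
qed

lemma nbhd_part_contains_corner:
  fixes P :: "(real^'n) set set"
  assumes cover: "\<Union>P = UNIV"
    and diam: "\<forall>X\<in>P. diam_max X \<le> ereal D" and "D < 2 * e" "0 \<le> e"
    and finite: "finite (nbhd_parts P e p)" and card: "card (nbhd_parts P e p) \<le> 2 ^ CARD('n)"
    and X: "X \<in> nbhd_parts P e p"
  obtains u where "corner e p u \<in> X"
proof -
  define part where "part u = (SOME X. X \<in> P \<and> corner e p u \<in> X)" for u
  have part: "part u \<in> P \<and> corner e p u \<in> part u" for u
  proof -
    have "\<exists>X. X \<in> P \<and> corner e p u \<in> X"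
      using cover by blast
    then show ?thesis
      unfolding part_def by (rule someI_ex)
  qed
  have "inj part"
  proof (rule injI)
    fix u v
    assume "part u = part v"
    then show "u = v"
      using part[of u] part[of v] diam corners_in_same_part_eq[OF _ \<open>D < 2 * e\<close> \<open>0 \<le> e\<close>]
      by metis
  qed
  then have "card (range part) = card (UNIV :: 'n set set)"
    by (rule card_image)
  also have "\<dots> = 2 ^ CARD('n)"
    using card_Pow[of "UNIV :: 'n set"] by simp
  finally have "card (nbhd_parts P e p) \<le> card (range part)"
    using card by simp
  moreover have "range part \<subseteq> nbhd_parts P e p"
    using part corner_in_closed_ball_max[OF \<open>0 \<le> e\<close>] unfolding nbhd_parts_def by blast
  ultimately have "range part = nbhd_parts P e p"
    using card_seteq[OF finite] by blast
  with X obtain u where "X = part u"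
    by blast
  with part that show ?thesis
    by blast
qed

lemma top_corner_part_shift:
  fixes P :: "(real^'n) set set"
  assumes cover: "\<Union>P = UNIV"
    and diam: "\<forall>X\<in>P. diam_max X \<le> ereal D" and "0 \<le> D" and "0 < e"
    and nbhd: "\<forall>p. finite (nbhd_parts P e p) \<and> card (nbhd_parts P e p) \<le> 2 ^ CARD('n)"
    and t: "0 \<le> t" "t < 2 * e - D"
    and X: "X \<in> P" "corner e p UNIV \<in> X"
  shows "corner e (p + (\<chi> i. t)) UNIV \<in> X"
proof -
  let ?q = "p + (\<chi> i. t)"
  have "corner e p UNIV \<in> closed_ball_max e ?q"
    unfolding closed_ball_max_def dmax_le_iff corner_def using t \<open>0 \<le> D\<close> by auto
  with X have "X \<in> nbhd_parts P e ?q"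
    unfolding nbhd_parts_def by blast
  moreover have "D < 2 * e" "0 \<le> e"
    using t \<open>0 < e\<close> by linarith+
  ultimately obtain u where u: "corner e ?q u \<in> X"
    using nbhd_part_contains_corner[OF cover diam] nbhd by blast
  have "u = UNIV"
  proof (rule ccontr)
    assume "u \<noteq> UNIV"
    then obtain i where "i \<notin> u" by blast
    then have "\<bar>corner e p UNIV $ i - corner e ?q u $ i\<bar> = 2 * e - t"
      using t \<open>0 \<le> D\<close> unfolding corner_def by auto
    moreover have "dmax (corner e p UNIV) (corner e ?q u) \<le> D"
      using dmax_le_if_diam_max_le diam X u by blast
    ultimately show False
      using abs_component_diff_le_dmax[of "corner e p UNIV" i "corner e ?q u"] t by linarith
  qed
  with u show ?thesis by simp
qed

theorem mainTheorem8:
  fixes P :: "(real^'n) set set" and D \<epsilon> :: real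
  assumes "is_partition P"
    and "D > 0" and "\<forall>X\<in>P. diam_max X \<le> ereal D"
    and "\<epsilon> > 0"
    and "\<forall>p. finite (nbhd_parts P \<epsilon> p) \<and> card (nbhd_parts P \<epsilon> p) \<le> 2 ^ CARD('n)"
  shows "\<epsilon> \<le> D / 2"
proof (rule ccontr)
  assume "\<not> \<epsilon> \<le> D / 2"
  define t where "t = (2 * \<epsilon> - D) / 2"
  have t: "0 < t" "t < 2 * \<epsilon> - D"
    using \<open>\<not> \<epsilon> \<le> D / 2\<close> unfolding t_def by auto
  have cover: "\<Union>P = UNIV"
    using \<open>is_partition P\<close> unfolding is_partition_def by blast
  define c where "c n = corner \<epsilon> (\<chi> i :: 'n. real n * t) UNIV" for n :: nat
  obtain X where X: "X \<in> P" "c 0 \<in> X"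
    using cover by blast
  have c_in_X: "c n \<in> X" for n
  proof (induction n)
    case (Suc n)
    have "(\<chi> i. real (Suc n) * t) = (\<chi> i. real n * t) + (\<chi> i :: 'n. t)"
      by (simp add: vec_eq_iff algebra_simps)
    then show ?case
      using top_corner_part_shift[OF cover assms(3) less_imp_le[OF assms(2)] assms(4,5)
          less_imp_le[OF t(1)] t(2) \<open>X \<in> P\<close> Suc[unfolded c_def]]
      unfolding c_def by simp
  qed (use X in simp)
  obtain n :: nat where "D < real n * t"
    using reals_Archimedean3[OF t(1)] by blast
  moreover have "dmax (c n) (c 0) = real n * t"
    using t unfolding dmax_def c_def corner_def by simp
  moreover have "dmax (c n) (c 0) \<le> D"
    using dmax_le_if_diam_max_le assms(3) X c_in_X by blast
  ultimately show False
    by linarith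
qed

end
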